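(* Let $G$ be a group with finite presentation $\mathcal P=\langle t,\mathcal A:\mathcal R,\ t^{-1}at=\phi(a)\ (a\in\mathcal A)\rangle$ of bounded depth $B\ge0$, $X$ its Cayley 2-complex and $P:X\to\mathbb R$ the level map. If $\alpha$ is an edge path loop in $X$ with $P(\alpha)\subset(-\infty,L]$, then $\alpha$ is homotopically trivial by a homotopy $H$ with $P(H)\subset(-\infty,L+B]$.
   Context: $\mathcal A$ is finite, $\mathcal R\subset F(\mathcal A)$ finite, $\phi:F(\mathcal A)\to F(\mathcal A)$ a homomorphism. Let $N_0$ be the normal closure in $F(\mathcal A)$ of $\bigcup_{j\ge0}\phi^j(\mathcal R)$ and $N^\infty=\bigcup_{i\ge0}\phi^{-i}(N_0)$; $\mathcal P$ has bounded depth $B$ if $N^\infty=\bigcup_{i=0}^B\phi^{-i}(N_0)$. $X$ is the simply connected 2-complex with vertex set $G$, 1-skeleton the Cayley graph with respect to $\mathcal A\cup\{t\}$, and 2-cells for relators. $P$ sends a vertex to the exponent sum of $t$ in it, each $\mathcal R$-cell to the level of its vertices, each conjugation 2-cell (boundary $a t\phi(a)^{-1}t^{-1}$, $a$-edge at level $L'$) onto $[L',L'+1]$, and $t$-edges linearly. *)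

theory Defs
  imports Complex_Main
begin

text \<open>A word over an alphabet 'b is a list of pairs (x, e) where e = True means the
  inverse letter x^-1.  Free group elements are such words up to free reduction.\<close>

type_synonym 'b fword = "('b \<times> bool) list"

definition winv :: "'b fword \<Rightarrow> 'b fword" where
  "winv w = rev (map (\<lambda>(x, e). (x, \<not> e)) w)"

text \<open>The reflexive-transitive
  closure relates w to the empty word iff w lies in the normal closure of S in the free
  group (iff w represents 1 in the group presented by S).\<close>

inductive elem_step :: "'b fword set \<Rightarrow> 'b fword \<Rightarrow> 'b fword \<Rightarrow> bool" for S where
  ins_free: "elem_step S (u @ v) (u @ [(x, e), (x, \<not> e)] @ v)"
| del_free: "elem_step S (u @ [(x, e), (x, \<not> e)] @ v) (u @ v)"
| ins_rel: "r \<in> S \<Longrightarrow> elem_step S (u @ v) (u @ r @ v)"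
| del_rel: "r \<in> S \<Longrightarrow> elem_step S (u @ r @ v) (u @ v)"

definition in_normal_closure :: "'b fword set \<Rightarrow> 'b fword \<Rightarrow> bool" where
  "in_normal_closure S w \<longleftrightarrow> (elem_step S)\<^sup>*\<^sup>* w []"

definition phi_word :: "('a \<Rightarrow> 'a fword) \<Rightarrow> 'a fword \<Rightarrow> 'a fword" where
  "phi_word \<phi> w = concat (map (\<lambda>(a, e). if e then winv (\<phi> a) else \<phi> a) w)"

definition N0 :: "('a \<Rightarrow> 'a fword) \<Rightarrow> 'a fword set \<Rightarrow> 'a fword set" where
  "N0 \<phi> R = {w. in_normal_closure (\<Union>j. (phi_word \<phi> ^^ j) ` R) w}"

text \<open>Bounded depth B: N^infty = union over i <= B of phi^-i(N_0).
  (The inclusion of the finite union in N^infty is automatic.)\<close>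

definition bounded_depth :: "('a \<Rightarrow> 'a fword) \<Rightarrow> 'a fword set \<Rightarrow> nat \<Rightarrow> bool" where
  "bounded_depth \<phi> R B \<longleftrightarrow>
     (\<forall>w. (\<exists>i. (phi_word \<phi> ^^ i) w \<in> N0 \<phi> R) \<longrightarrow> (\<exists>i\<le>B. (phi_word \<phi> ^^ i) w \<in> N0 \<phi> R))"

datatype 'a letter = T | Gen 'a

definition lift_word :: "'a fword \<Rightarrow> 'a letter fword" where
  "lift_word w = map (\<lambda>(a, e). (Gen a, e)) w"

definition pres_rels :: "('a \<Rightarrow> 'a fword) \<Rightarrow> 'a fword set \<Rightarrow> 'a letter fword set" where
  "pres_rels \<phi> R = lift_word ` R \<union>
     {[(Gen a, False), (T, False)] @ winv (lift_word (\<phi> a)) @ [(T, True)] | a. True}"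

text \<open>Boundary words of the 2-cells of X at a vertex: all cyclic rotations of the relators
  and of their inverses (read in either orientation, from any corner).\<close>

definition cell_boundaries :: "('a \<Rightarrow> 'a fword) \<Rightarrow> 'a fword set \<Rightarrow> 'a letter fword set" where
  "cell_boundaries \<phi> R = {rotate k r | k r. r \<in> pres_rels \<phi> R \<or> winv r \<in> pres_rels \<phi> R}"

text \<open>The level map P on vertices: exponent sum of t.\<close>

definition tsum :: "'a letter fword \<Rightarrow> int" where
  "tsum w = (\<Sum>p\<leftarrow>w. (case p of (T, e) \<Rightarrow> (if e then -1 else 1) | (Gen _, _) \<Rightarrow> 0))"

text \<open>The edge path starting at the vertex g (given by any word) and reading w
  has all its vertices at level <= M (hence, P being linear on t-edges and constant
  on A-edges, P maps the whole path into (-infinity, M]).\<close>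

definition path_below :: "'a letter fword \<Rightarrow> real \<Rightarrow> 'a letter fword \<Rightarrow> bool" where
  "path_below g M w \<longleftrightarrow> (\<forall>k\<le>length w. real_of_int (tsum (g @ take k w)) \<le> M)"

text \<open>Elementary (cellular) homotopy moves of edge paths based at g in X which stay in
  P^-1(-infinity, M]: removing/inserting a backtrack or a 2-cell boundary, where all
  paths involved (hence all edges and 2-cells swept, P mapping each 2-cell onto the
  interval spanned by its vertex levels) lie at level <= M.\<close>

definition bounded_step ::
  "('a \<Rightarrow> 'a fword) \<Rightarrow> 'a fword set \<Rightarrow> 'a letter fword \<Rightarrow> real \<Rightarrow> 'a letter fword \<Rightarrow> 'a letter fword \<Rightarrow> bool" where
  "bounded_step \<phi> R g M u v \<longleftrightarrow>
     elem_step (cell_boundaries \<phi> R) u v \<and> path_below g M u \<and> path_below g M v"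

end

theory Submission
  imports Defs
begin

text \<open>
  Reading the loop letter by letter, it is homotoped, without leaving the half-space below L, to
  a normal form t^p W t^-q with W a word over A: an A-letter is moved to the left of the trailing
  t^-q using t^-1 a = phi(a) t^-1, which only lowers the path, and a t that meets no t^-1 is moved
  to the left of W using W t = t phi(W), which only reaches levels the loop itself reaches.  The
  state (p, W, q) is an invariant of the element of G represented by the loop, read modulo the
  identification of t^p W t^-q with t^p' W' t^-q' when p - q = p' - q' and phi^(i+q')(W),
  phi^(i+q)(W') agree modulo N_0 for some i.  A null-homotopic loop therefore has p = q and
  phi^i(W) in N_0, and bounded depth lets one take i = k <= B.  Finally W is conjugated up to
  t^k phi^k(W) t^-k, and phi^k(W) is killed at level p + k <= L + B, where each relator phi^j(r)
  bounds the disc t^-j r t^j reaching below, not above, its level.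
\<close>

section \<open>Words and levels\<close>

abbreviation t_up :: "'a letter \<times> bool" where "t_up \<equiv> (T, False)"
abbreviation t_down :: "'a letter \<times> bool" where "t_down \<equiv> (T, True)"

lemma winv_Nil [simp]: "winv [] = []"
  by (simp add: winv_def)

lemma winv_Cons [simp]: "winv (x # w) = winv w @ [(fst x, \<not> snd x)]"
  by (cases x) (simp add: winv_def)

lemma winv_append [simp]: "winv (u @ v) = winv v @ winv u"
  by (simp add: winv_def)

lemma winv_winv [simp]: "winv (winv w) = w"
  by (induction w) auto

lemma winv_replicate [simp]: "winv (replicate n (x, e)) = replicate n (x, \<not> e)"
  by (simp add: winv_def)

lemma lift_word_Nil [simp]: "lift_word [] = []"
  by (simp add: lift_word_def)

lemma lift_word_Cons [simp]: "lift_word (x # w) = (Gen (fst x), snd x) # lift_word w"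
  by (cases x) (simp add: lift_word_def)

lemma lift_word_append [simp]: "lift_word (u @ v) = lift_word u @ lift_word v"
  by (simp add: lift_word_def)

lemma lift_word_winv [simp]: "lift_word (winv w) = winv (lift_word w)"
  by (induction w) auto

lemma phi_word_Nil [simp]: "phi_word f [] = []"
  by (simp add: phi_word_def)

lemma phi_word_Cons [simp]:
  "phi_word f (x # w) = (if snd x then winv (f (fst x)) else f (fst x)) @ phi_word f w"
  by (cases x) (simp add: phi_word_def)

lemma phi_word_append [simp]: "phi_word f (u @ v) = phi_word f u @ phi_word f v"
  by (simp add: phi_word_def)

lemma phi_word_winv [simp]: "phi_word f (winv w) = winv (phi_word f w)"
  by (induction w) auto

lemma funpow_apply_funpow: "(f ^^ m) ((f ^^ n) x) = (f ^^ (m + n)) x"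
  by (simp add: funpow_add)

lemma funpow_phi_word_Nil [simp]: "(phi_word f ^^ n) [] = []"
  by (induction n) auto

lemma funpow_phi_word_append [simp]:
  "(phi_word f ^^ n) (u @ v) = (phi_word f ^^ n) u @ (phi_word f ^^ n) v"
  by (induction n) auto

lemma funpow_phi_word_winv [simp]: "(phi_word f ^^ n) (winv w) = winv ((phi_word f ^^ n) w)"
  by (induction n) auto

lemma tsum_Nil [simp]: "tsum [] = 0"
  by (simp add: tsum_def)

lemma tsum_Cons_T [simp]: "tsum ((T, e) # w) = (if e then -1 else 1) + tsum w"
  by (simp add: tsum_def)

lemma tsum_Cons_Gen [simp]: "tsum ((Gen a, e) # w) = tsum w"
  by (simp add: tsum_def)

lemma tsum_append [simp]: "tsum (u @ v) = tsum u + tsum v"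
  by (simp add: tsum_def)

lemma tsum_Cons: "NO_MATCH [] w \<Longrightarrow> tsum (x # w) = tsum [x] + tsum w"
  using tsum_append[of "[x]" w] by simp

lemma tsum_inverse_letter [simp]: "tsum [(y, \<not> e)] = - tsum [(y, e)]"
  by (cases y) auto

lemma tsum_lift_word [simp]: "tsum (lift_word w) = 0"
  by (induction w) auto

lemma tsum_winv [simp]: "tsum (winv w) = - tsum w"
proof (induction w)
  case (Cons x w)
  then show ?case
    by (cases x, cases "fst x") auto
qed simp

lemma tsum_replicate_T [simp]: "tsum (replicate n (T, e)) = (if e then - int n else int n)"
  by (induction n) auto

lemma tsum_rotate [simp]: "tsum (rotate k w) = tsum w"
proof -
  have "tsum (rotate1 w) = tsum w" for w :: "'a letter fword"
    by (cases w) (simp_all add: tsum_Cons add.commute)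
  then show ?thesis
    by (induction k) (simp_all add: rotate_Suc)
qed

text \<open>A path depends on its base point only through the level of that point, which
  \<open>levels_below\<close> makes explicit; its simp rules compute the levels along a path.\<close>

fun levels_below :: "int \<Rightarrow> real \<Rightarrow> 'a letter fword \<Rightarrow> bool" where
  "levels_below n M [] \<longleftrightarrow> real_of_int n \<le> M"
| "levels_below n M (x # w) \<longleftrightarrow> real_of_int n \<le> M \<and> levels_below (n + tsum [x]) M w"

lemma path_below_iff_levels_below: "path_below h M w \<longleftrightarrow> levels_below (tsum h) M w"
proof (induction w arbitrary: h)
  case (Cons x w)
  have "(\<forall>k\<le>length (x # w). P k) \<longleftrightarrow> P 0 \<and> (\<forall>k\<le>length w. P (Suc k))" for P
    by (metis Suc_le_mono length_Cons not0_implies_Suc zero_le)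
  then have "path_below h M (x # w) \<longleftrightarrow>
      real_of_int (tsum h) \<le> M \<and> (\<forall>k\<le>length w. real_of_int (tsum ((h @ [x]) @ take k w)) \<le> M)"
    unfolding path_below_def by simp
  then show ?case
    using Cons.IH[of "h @ [x]"] by (simp add: path_below_def)
qed (simp add: path_below_def)

lemma levels_below_start: "levels_below n M w \<Longrightarrow> real_of_int n \<le> M"
  by (cases w) auto

lemma levels_below_append [simp]:
  "levels_below n M (u @ v) \<longleftrightarrow> levels_below n M u \<and> levels_below (n + tsum u) M v"
  by (induction u arbitrary: n) (auto simp: tsum_Cons add.assoc dest: levels_below_start)

lemma levels_below_end: "levels_below n M w \<Longrightarrow> real_of_int (n + tsum w) \<le> M"
  using levels_below_append[of n M w "[]"] by simp

lemmas level_simps = path_below_iff_levels_below add.assoc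

lemma levels_below_winv [simp]: "levels_below n M (winv w) \<longleftrightarrow> levels_below (n - tsum w) M w"
proof (induction w arbitrary: n)
  case (Cons x w)
  then show ?case
    by (cases x, cases "fst x") (auto simp: algebra_simps dest: levels_below_start)
qed simp

lemma levels_below_lift_word [simp]: "levels_below n M (lift_word w) \<longleftrightarrow> real_of_int n \<le> M"
  by (induction w) auto

lemma levels_below_replicate_up [simp]:
  "levels_below n M (replicate k t_up) \<longleftrightarrow> real_of_int n + k \<le> M"
  by (induction k arbitrary: n) auto

lemma levels_below_replicate_down [simp]:
  "levels_below n M (replicate k t_down) \<longleftrightarrow> real_of_int n \<le> M"
  by (induction k arbitrary: n) auto

lemma levels_below_mono: "levels_below n M w \<Longrightarrow> M \<le> M' \<Longrightarrow> levels_below n M' w"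
  by (induction w arbitrary: n) auto

section \<open>Elementary moves and the 2-cells of X\<close>

lemma elem_step_context: "elem_step S u v \<Longrightarrow> elem_step S (p @ u @ s) (p @ v @ s)"
proof (induction rule: elem_step.induct)
  case (ins_free u v x e)
  then show ?case using elem_step.ins_free[of S "p @ u" "v @ s" x e] by simp
next
  case (del_free u x e v)
  then show ?case using elem_step.del_free[of S "p @ u" x e "v @ s"] by simp
next
  case (ins_rel r u v)
  then show ?case using elem_step.ins_rel[of r S "p @ u" "v @ s"] by simp
next
  case (del_rel r u v)
  then show ?case using elem_step.del_rel[of r S "p @ u" "v @ s"] by simp
qed

lemma elem_step_sym: "elem_step S u v \<Longrightarrow> elem_step S v u"
proof (induction rule: elem_step.induct)
  case (ins_free u v x e)
  then show ?case using elem_step.del_free[of S u x e v] by simp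
next
  case (del_free u x e v)
  then show ?case using elem_step.ins_free[of S u v x e] by simp
qed (auto intro: elem_step.intros)

lemma rotate_in_cell_boundaries:
  assumes "r \<in> cell_boundaries \<phi> R"
  shows "rotate k r \<in> cell_boundaries \<phi> R"
proof -
  obtain m r0 where "r = rotate m r0" "r0 \<in> pres_rels \<phi> R \<or> winv r0 \<in> pres_rels \<phi> R"
    using assms unfolding cell_boundaries_def by blast
  then show ?thesis
    unfolding cell_boundaries_def by (auto simp: rotate_rotate)
qed

lemma tsum_cell_boundaries: "r \<in> cell_boundaries \<phi> R \<Longrightarrow> tsum r = 0"
proof -
  have tsum_pres_rels: "tsum r = 0" if "r \<in> pres_rels \<phi> R" for r
    using that unfolding pres_rels_def by auto
  then show "r \<in> cell_boundaries \<phi> R \<Longrightarrow> tsum r = 0"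
    unfolding cell_boundaries_def by (auto dest!: tsum_pres_rels) 
qed

lemma lift_word_in_cell_boundaries: "r \<in> R \<Longrightarrow> lift_word r \<in> cell_boundaries \<phi> R"
  unfolding cell_boundaries_def pres_rels_def by (auto intro: exI[of _ 0])

lemma conjugation_in_cell_boundaries:
  "[(Gen a, e), t_up] @ winv (lift_word (phi_word \<phi> [(a, e)])) @ [t_down] \<in> cell_boundaries \<phi> R"
proof -
  define r where "r = [(Gen a, False), t_up] @ winv (lift_word (\<phi> a)) @ [t_down]"
  have r: "r \<in> pres_rels \<phi> R"
    unfolding r_def pres_rels_def by blast
  show ?thesis
  proof (cases e)
    case True
    have "winv r = (t_up # lift_word (\<phi> a) @ [t_down]) @ [(Gen a, True)]"
      by (simp add: r_def)
    then have "[(Gen a, e), t_up] @ winv (lift_word (phi_word \<phi> [(a, e)])) @ [t_down] =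
        rotate (length (t_up # lift_word (\<phi> a) @ [t_down])) (winv r)"
      by (simp only: rotate_append) (simp add: True)
    moreover have "winv (winv r) \<in> pres_rels \<phi> R"
      using r by simp
    ultimately show ?thesis
      unfolding cell_boundaries_def by blast
  next
    case False
    then show ?thesis
      using r unfolding cell_boundaries_def by (auto simp: r_def intro!: exI[of _ 0])
  qed
qed

lemma conjugation_rotated_in_cell_boundaries:
  "[t_down, (Gen a, e), t_up] @ winv (lift_word (phi_word \<phi> [(a, e)])) \<in> cell_boundaries \<phi> R"
proof -
  let ?l = "[(Gen a, e), t_up] @ winv (lift_word (phi_word \<phi> [(a, e)]))"
  have "rotate (length ?l) (?l @ [t_down]) \<in> cell_boundaries \<phi> R"
    using rotate_in_cell_boundaries conjugation_in_cell_boundaries by (metis append_assoc)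
  then show ?thesis
    by (simp only: rotate_append) simp
qed

lemma elem_step_tsum: "elem_step (cell_boundaries \<phi> R) u v \<Longrightarrow> tsum u = tsum v"
proof (induction rule: elem_step.induct)
  case (ins_free u v x e)
  then show ?case by (cases x) auto
next
  case (del_free u x e v)
  then show ?case by (cases x) auto
qed (auto simp: tsum_cell_boundaries)

section \<open>The normal form t^p W t^-q\<close>

definition N0_relators :: "('a \<Rightarrow> 'a fword) \<Rightarrow> 'a fword set \<Rightarrow> 'a fword set" where
  "N0_relators \<phi> R = (\<Union>j. (phi_word \<phi> ^^ j) ` R)"

abbreviation equiv_mod :: "'b fword set \<Rightarrow> 'b fword \<Rightarrow> 'b fword \<Rightarrow> bool" where
  "equiv_mod S \<equiv> (elem_step S)\<^sup>*\<^sup>*"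

lemma equiv_mod_sym: "equiv_mod S X Y \<Longrightarrow> equiv_mod S Y X"
  by (induction rule: rtranclp_induct) (auto intro: converse_rtranclp_into_rtranclp elem_step_sym)

lemma equiv_mod_context: "equiv_mod S X Y \<Longrightarrow> equiv_mod S (p @ X @ s) (p @ Y @ s)"
  by (induction rule: rtranclp_induct) (auto intro: rtranclp.rtrancl_into_rtrancl elem_step_context)

lemma equiv_mod_append: "equiv_mod S X X' \<Longrightarrow> equiv_mod S Y Y' \<Longrightarrow> equiv_mod S (X @ Y) (X' @ Y')"
  using equiv_mod_context[of S X X' "[]" Y] equiv_mod_context[of S Y Y' X' "[]"] by simp

lemma equiv_mod_cancel: "equiv_mod S (X @ winv X) []"
proof (induction X)
  case (Cons x X)
  obtain a e where x: "x = (a, e)"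
    by force
  have "equiv_mod S ([x] @ (X @ winv X) @ [(a, \<not> e)]) ([x] @ [] @ [(a, \<not> e)])"
    using Cons by (rule equiv_mod_context)
  moreover have "elem_step S ([] @ [(a, e), (a, \<not> e)] @ []) ([] @ [])"
    by (rule elem_step.del_free)
  ultimately show ?case
    by (simp add: x rtranclp.rtrancl_into_rtrancl)
qed simp

lemma equiv_mod_cancel_left: "equiv_mod S (winv X @ X) []"
  using equiv_mod_cancel[of S "winv X"] by simp

lemma equiv_mod_phi_word:
  assumes closed: "\<And>r. r \<in> S \<Longrightarrow> phi_word \<phi> r \<in> S"
  shows "equiv_mod S X Y \<Longrightarrow> equiv_mod S (phi_word \<phi> X) (phi_word \<phi> Y)"
proof (induction rule: rtranclp_induct)
  case (step Y Z)
  have pair: "equiv_mod S (phi_word \<phi> [(x, e), (x, \<not> e)]) []" for x e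
    by (cases e) (simp_all add: equiv_mod_cancel equiv_mod_cancel_left)
  have "equiv_mod S (phi_word \<phi> Y) (phi_word \<phi> Z)"
    using step(2)
  proof (cases rule: elem_step.cases)
    case (ins_free u v x e)
    then show ?thesis
      using equiv_mod_context[OF pair, of "phi_word \<phi> u" x e "phi_word \<phi> v"]
      by (simp add: equiv_mod_sym)
  next
    case (del_free u x e v)
    then show ?thesis
      using equiv_mod_context[OF pair, of "phi_word \<phi> u" x e "phi_word \<phi> v"] by simp
  next
    case (ins_rel r u v)
    then show ?thesis
      using elem_step.ins_rel[OF closed] by (simp add: r_into_rtranclp)
  next
    case (del_rel r u v)
    then show ?thesis
      using elem_step.del_rel[OF closed] by (simp add: r_into_rtranclp)
  qed
  with step.IH show ?case
    by simp
qed simp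

lemma N0_relators_phi_word: "r \<in> N0_relators \<phi> R \<Longrightarrow> phi_word \<phi> r \<in> N0_relators \<phi> R"
proof -
  assume "r \<in> N0_relators \<phi> R"
  then obtain j r0 where "r = (phi_word \<phi> ^^ j) r0" "r0 \<in> R"
    unfolding N0_relators_def by blast
  then have "phi_word \<phi> r \<in> (phi_word \<phi> ^^ Suc j) ` R"
    by simp
  then show ?thesis
    unfolding N0_relators_def by blast
qed

lemma equiv_mod_funpow_phi_word:
  "equiv_mod (N0_relators \<phi> R) X Y \<Longrightarrow>
    equiv_mod (N0_relators \<phi> R) ((phi_word \<phi> ^^ n) X) ((phi_word \<phi> ^^ n) Y)"
  by (induction n) (auto intro: equiv_mod_phi_word N0_relators_phi_word)

lemma equiv_mod_cancel_funpow_phi_word: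
  "equiv_mod (N0_relators \<phi> R) ((phi_word \<phi> ^^ n) (W @ Z @ winv Z)) ((phi_word \<phi> ^^ n) W)"
proof -
  have "equiv_mod (N0_relators \<phi> R) (W @ (Z @ winv Z) @ []) (W @ [] @ [])"
    by (rule equiv_mod_context[OF equiv_mod_cancel])
  from equiv_mod_funpow_phi_word[OF this, where n = n] show ?thesis
    by simp
qed

type_synonym 'a nf_state = "nat \<times> 'a fword \<times> nat"

fun nf_path :: "'a nf_state \<Rightarrow> 'a letter fword" where
  "nf_path (p, W, q) = replicate p t_up @ lift_word W @ replicate q t_down"

fun nf_step :: "('a \<Rightarrow> 'a fword) \<Rightarrow> 'a nf_state \<Rightarrow> 'a letter \<times> bool \<Rightarrow> 'a nf_state"
  where
    "nf_step \<phi> (p, W, q) (Gen a, e) = (p, W @ (phi_word \<phi> ^^ q) [(a, e)], q)"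
  | "nf_step \<phi> (p, W, q) (T, True) = (p, W, Suc q)"
  | "nf_step \<phi> (p, W, q) (T, False) =
      (if q > 0 then (p, W, q - 1) else (Suc p, phi_word \<phi> W, 0))"

definition nf_run :: "('a \<Rightarrow> 'a fword) \<Rightarrow> 'a nf_state \<Rightarrow> 'a letter fword \<Rightarrow> 'a nf_state"
  where "nf_run \<phi> = foldl (nf_step \<phi>)"

lemma nf_run_Nil [simp]: "nf_run \<phi> s [] = s"
  by (simp add: nf_run_def)

lemma nf_run_Cons [simp]: "nf_run \<phi> s (x # w) = nf_run \<phi> (nf_step \<phi> s x) w"
  by (simp add: nf_run_def)

lemma nf_run_append [simp]: "nf_run \<phi> s (u @ v) = nf_run \<phi> (nf_run \<phi> s u) v"
  by (simp add: nf_run_def)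

lemma nf_run_lift_word [simp]: "nf_run \<phi> (p, W, q) (lift_word X) = (p, W @ (phi_word \<phi> ^^ q) X, q)"
proof (induction X arbitrary: W)
  case (Cons x X)
  then show ?case
    using funpow_phi_word_append[where f = \<phi> and n = q and u = "[x]" and v = X] by (cases x) simp
qed simp

text \<open>Conjugating t^p W t^-q by t^(i+q+q') in G gives t^(p-q) phi^(i+q')(W).\<close>

fun same_element :: "('a \<Rightarrow> 'a fword) \<Rightarrow> 'a fword set \<Rightarrow> 'a nf_state \<Rightarrow> 'a nf_state \<Rightarrow> bool"
  where "same_element \<phi> R (p, W, q) (p', W', q') \<longleftrightarrow> int p - int q = int p' - int q' \<and>
    (\<exists>i. equiv_mod (N0_relators \<phi> R) ((phi_word \<phi> ^^ (i + q')) W) ((phi_word \<phi> ^^ (i + q)) W'))"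

lemma same_element_refl: "same_element \<phi> R s s"
  by (cases s) (auto intro!: exI[of _ 0])

lemma same_element_sym: "same_element \<phi> R s s' \<Longrightarrow> same_element \<phi> R s' s"
  by (cases s; cases s') (auto intro: equiv_mod_sym)

lemma same_element_trans:
  assumes "same_element \<phi> R s1 s2" "same_element \<phi> R s2 s3"
  shows "same_element \<phi> R s1 s3"
proof -
  obtain p1 W1 q1 p2 W2 q2 p3 W3 q3
    where s: "s1 = (p1, W1, q1)" "s2 = (p2, W2, q2)" "s3 = (p3, W3, q3)"
    by (cases s1; cases s2; cases s3)
  let ?\<Phi> = "\<lambda>n. phi_word \<phi> ^^ n"
  obtain i j where
    i: "equiv_mod (N0_relators \<phi> R) (?\<Phi> (i + q2) W1) (?\<Phi> (i + q1) W2)" and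
    j: "equiv_mod (N0_relators \<phi> R) (?\<Phi> (j + q3) W2) (?\<Phi> (j + q2) W3)"
    using assms by (auto simp: s)
  have "equiv_mod (N0_relators \<phi> R) (?\<Phi> (j + q3) (?\<Phi> (i + q2) W1)) (?\<Phi> (i + q1) (?\<Phi> (j + q3) W2))"
    using equiv_mod_funpow_phi_word[OF i, of "j + q3"] by (simp add: funpow_apply_funpow ac_simps)
  also have "equiv_mod (N0_relators \<phi> R) \<dots> (?\<Phi> (i + q1) (?\<Phi> (j + q2) W3))"
    using equiv_mod_funpow_phi_word[OF j] .
  finally have "equiv_mod (N0_relators \<phi> R) (?\<Phi> ((i + j + q2) + q3) W1) (?\<Phi> ((i + j + q2) + q1) W3)"
    by (simp add: funpow_apply_funpow ac_simps)
  then show ?thesis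
    using assms by (auto simp: s)
qed

lemma same_element_nf_step:
  assumes "same_element \<phi> R s s'"
  shows "same_element \<phi> R (nf_step \<phi> s x) (nf_step \<phi> s' x)"
proof -
  obtain p W q p' W' q' where s: "s = (p, W, q)" "s' = (p', W', q')"
    by (cases s; cases s')
  obtain i where
    i: "equiv_mod (N0_relators \<phi> R) ((phi_word \<phi> ^^ (i + q')) W) ((phi_word \<phi> ^^ (i + q)) W')"
    and d: "int p - int q = int p' - int q'"
    using assms by (auto simp: s)
  have up: "same_element \<phi> R (Suc p, phi_word \<phi> W, q) (Suc p', phi_word \<phi> W', q')"
    using equiv_mod_phi_word[OF N0_relators_phi_word i] d by (auto simp: funpow_swap1)
  have t_up_step: "same_element \<phi> R (nf_step \<phi> (p, W, q) t_up) (Suc p, phi_word \<phi> W, q)"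
    for p W q
    by (cases q) (auto intro!: exI[of _ 0] simp: funpow_swap1)
  obtain l e where x: "x = (l, e)"
    by force
  show ?thesis
  proof (cases l)
    case (Gen a)
    have "equiv_mod (N0_relators \<phi> R)
        ((phi_word \<phi> ^^ (i + q')) W @ (phi_word \<phi> ^^ (i + q')) ((phi_word \<phi> ^^ q) [(a, e)]))
        ((phi_word \<phi> ^^ (i + q)) W' @ (phi_word \<phi> ^^ (i + q)) ((phi_word \<phi> ^^ q') [(a, e)]))"
      by (rule equiv_mod_append[OF i]) (simp add: funpow_apply_funpow ac_simps)
    then show ?thesis
      using d by (auto simp: s x Gen)
  next
    case T
    show ?thesis
    proof (cases e)
      case True
      show ?thesis
        using equiv_mod_phi_word[OF N0_relators_phi_word i] d by (auto simp: s x T True)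
    next
      case False
      show ?thesis
        using same_element_trans[OF same_element_trans[OF t_up_step up]
            same_element_sym[OF t_up_step]]
        by (simp add: s x T False)
    qed
  qed
qed

lemma same_element_nf_run: "same_element \<phi> R s s' \<Longrightarrow> same_element \<phi> R (nf_run \<phi> s w) (nf_run \<phi> s' w)"
  by (induction w arbitrary: s s') (simp_all del: same_element.simps add: same_element_nf_step)

lemma nf_run_inverse_pair: "same_element \<phi> R (nf_run \<phi> s [(l, e), (l, \<not> e)]) s"
proof -
  obtain p W q where s: "s = (p, W, q)"
    by (cases s)
  show ?thesis
  proof (cases l)
    case (Gen a)
    have "equiv_mod (N0_relators \<phi> R)
        ((phi_word \<phi> ^^ q) (W @ (phi_word \<phi> ^^ q) [(a, e)] @ winv ((phi_word \<phi> ^^ q) [(a, e)])))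
        ((phi_word \<phi> ^^ q) W)"
      by (rule equiv_mod_cancel_funpow_phi_word)
    moreover have "(phi_word \<phi> ^^ q) [(a, \<not> e)] = winv ((phi_word \<phi> ^^ q) [(a, e)])"
      using funpow_phi_word_winv[where f = \<phi> and n = q and w = "[(a, e)]"] by simp
    ultimately show ?thesis
      by (auto simp: s Gen intro!: exI[of _ 0])
  next
    case T
    then show ?thesis
      by (cases e; cases q) (auto simp: s intro!: exI[of _ 0])
  qed
qed

lemma nf_run_relator:
  assumes "r \<in> pres_rels \<phi> R"
  shows "same_element \<phi> R (nf_run \<phi> s r) s"
proof -
  obtain p W q where s: "s = (p, W, q)"
    by (cases s)
  show ?thesis
  proof (cases "r \<in> lift_word ` R")
    case True
    then obtain r0 where r0: "r = lift_word r0" "r0 \<in> R"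
      by blast
    have "(phi_word \<phi> ^^ q) ((phi_word \<phi> ^^ q) r0) \<in> N0_relators \<phi> R"
      unfolding N0_relators_def funpow_apply_funpow using r0(2) by blast
    then have "elem_step (N0_relators \<phi> R)
        ((phi_word \<phi> ^^ q) W @ (phi_word \<phi> ^^ q) ((phi_word \<phi> ^^ q) r0) @ [])
        ((phi_word \<phi> ^^ q) W @ [])"
      by (rule elem_step.del_rel)
    then show ?thesis
      by (auto simp: s r0 intro!: exI[of _ 0])
  next
    case False
    then obtain a where r: "r = [(Gen a, False), t_up] @ winv (lift_word (\<phi> a)) @ [t_down]"
      using assms unfolding pres_rels_def by blast
    show ?thesis
    proof (cases q)
      case 0
      have "equiv_mod (N0_relators \<phi> R) ((phi_word \<phi> ^^ 0) (phi_word \<phi> W @ \<phi> a @ winv (\<phi> a)))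
          ((phi_word \<phi> ^^ 0) (phi_word \<phi> W))"
        by (rule equiv_mod_cancel_funpow_phi_word)
      then show ?thesis
        by (auto simp: s r 0 simp flip: lift_word_winv intro!: exI[of _ 0])
    next
      case (Suc q')
      have "(phi_word \<phi> ^^ Suc q') [(a, False)] = (phi_word \<phi> ^^ q') (\<phi> a)"
        by (simp add: funpow_Suc_right del: funpow.simps)
      moreover have "equiv_mod (N0_relators \<phi> R)
          ((phi_word \<phi> ^^ Suc q') (W @ (phi_word \<phi> ^^ q') (\<phi> a) @ winv ((phi_word \<phi> ^^ q') (\<phi> a))))
          ((phi_word \<phi> ^^ Suc q') W)"
        by (rule equiv_mod_cancel_funpow_phi_word)
      ultimately show ?thesis
        by (auto simp: s r Suc simp del: funpow.simps simp flip: lift_word_winv intro!: exI[of _ 0])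
    qed
  qed
qed

lemma nf_run_elem_step:
  "elem_step (pres_rels \<phi> R) u v \<Longrightarrow> same_element \<phi> R (nf_run \<phi> s u) (nf_run \<phi> s v)"
proof (induction rule: elem_step.induct)
  case (ins_free u v x e)
  have "same_element \<phi> R (nf_run \<phi> (nf_run \<phi> s u) v)
      (nf_run \<phi> (nf_run \<phi> (nf_run \<phi> s u) [(x, e), (x, \<not> e)]) v)"
    by (rule same_element_nf_run, rule same_element_sym, rule nf_run_inverse_pair)
  then show ?case
    by simp
next
  case (del_free u x e v)
  have "same_element \<phi> R (nf_run \<phi> (nf_run \<phi> (nf_run \<phi> s u) [(x, e), (x, \<not> e)]) v)
      (nf_run \<phi> (nf_run \<phi> s u) v)"
    by (rule same_element_nf_run, rule nf_run_inverse_pair)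
  then show ?case
    by simp
next
  case (ins_rel r u v)
  have "same_element \<phi> R (nf_run \<phi> (nf_run \<phi> s u) v) (nf_run \<phi> (nf_run \<phi> (nf_run \<phi> s u) r) v)"
    using ins_rel by (rule same_element_nf_run[OF same_element_sym[OF nf_run_relator]])
  then show ?case
    by simp
next
  case (del_rel r u v)
  have "same_element \<phi> R (nf_run \<phi> (nf_run \<phi> (nf_run \<phi> s u) r) v) (nf_run \<phi> (nf_run \<phi> s u) v)"
    using del_rel by (rule same_element_nf_run[OF nf_run_relator])
  then show ?case
    by simp
qed

lemma nf_run_normal_closure:
  "in_normal_closure (pres_rels \<phi> R) w \<Longrightarrow> same_element \<phi> R (nf_run \<phi> s w) s"
  unfolding in_normal_closure_def
proof (induction rule: converse_rtranclp_induct)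
  case (step y z)
  then show ?case
    using nf_run_elem_step[OF step(1), of s] same_element_trans by blast
qed (simp del: same_element.simps add: same_element_refl)

section \<open>Homotopies below a level\<close>

context
  fixes \<phi> :: "'a \<Rightarrow> 'a fword" and R :: "'a fword set"
begin

abbreviation homotopic_below ::
  "'a letter fword \<Rightarrow> real \<Rightarrow> 'a letter fword \<Rightarrow> 'a letter fword \<Rightarrow> bool" where
  "homotopic_below g M \<equiv> (bounded_step \<phi> R g M)\<^sup>*\<^sup>*"

lemma homotopic_below_tsum: "homotopic_below g M u v \<Longrightarrow> tsum u = tsum v"
  by (induction rule: rtranclp_induct) (auto simp: bounded_step_def dest: elem_step_tsum)

lemma homotopic_below_sym: "homotopic_below g M u v \<Longrightarrow> homotopic_below g M v u"
  by (induction rule: rtranclp_induct)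
    (auto simp: bounded_step_def intro: converse_rtranclp_into_rtranclp elem_step_sym)

lemma homotopic_below_mono:
  assumes "M \<le> M'"
  shows "homotopic_below g M u v \<Longrightarrow> homotopic_below g M' u v"
proof (induction rule: rtranclp_induct)
  case (step y z)
  then have "bounded_step \<phi> R g M' y z"
    using assms by (auto simp: bounded_step_def level_simps intro: levels_below_mono)
  with step.IH show ?case
    by simp
qed simp

lemma homotopic_below_elem_step:
  "elem_step (cell_boundaries \<phi> R) u v \<Longrightarrow> path_below g M u \<Longrightarrow> path_below g M v \<Longrightarrow>
    homotopic_below g M u v"
  by (simp add: bounded_step_def r_into_rtranclp)

lemma homotopic_below_context:
  assumes "homotopic_below (g @ p) M u v" "path_below g M p" "path_below (g @ p @ u) M s"
  shows "homotopic_below g M (p @ u @ s) (p @ v @ s)"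
  using assms(1)
proof (induction rule: rtranclp_induct)
  case (step y z)
  have "tsum y = tsum u" "tsum z = tsum u"
    using homotopic_below_tsum step by (auto simp: bounded_step_def dest: elem_step_tsum)
  then have "bounded_step \<phi> R g M (p @ y @ s) (p @ z @ s)"
    using step(2) assms(2,3)
    by (simp add: bounded_step_def elem_step_context level_simps)
  then show ?case
    using step.IH by simp
qed simp

lemma homotopic_below_contextI:
  assumes "homotopic_below (g @ p) M u v" "path_below g M p" "path_below (g @ p @ u) M s"
    and "x = p @ u @ s" "y = p @ v @ s"
  shows "homotopic_below g M x y"
  using homotopic_below_context assms by blast

lemma homotopic_below_append_right:
  "homotopic_below g M u v \<Longrightarrow> path_below g M (u @ s) \<Longrightarrow> homotopic_below g M (u @ s) (v @ s)"
  using homotopic_below_context[of g "[]" M u v s]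
  by (auto simp: level_simps dest: levels_below_start)

lemma homotopic_below_insert_inverse:
  "path_below g M v \<Longrightarrow> homotopic_below g M [] (v @ winv v)"
proof (induction v arbitrary: g)
  case (Cons x v)
  obtain y e where x: "x = (y, e)"
    by force
  have "elem_step (cell_boundaries \<phi> R) ([] @ []) ([] @ [(y, e), (y, \<not> e)] @ [])"
    by (rule elem_step.ins_free)
  moreover have "path_below g M [x, (y, \<not> e)]"
    using Cons.prems by (cases y) (auto simp: x level_simps dest: levels_below_start)
  ultimately have "homotopic_below g M [] ([x] @ [] @ [(y, \<not> e)])"
    by (intro homotopic_below_elem_step) (auto simp: x level_simps)
  also have "homotopic_below g M \<dots> ([x] @ (v @ winv v) @ [(y, \<not> e)])"
    using Cons \<open>path_below g M [x, (y, \<not> e)]\<close>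
    by (intro homotopic_below_context) (auto simp: level_simps x)
  finally show ?case
    by (simp add: x)
qed simp

lemma homotopic_below_cell_replace:
  assumes "u @ winv v \<in> cell_boundaries \<phi> R" "path_below g M u" "path_below g M v"
  shows "homotopic_below g M u v"
proof -
  have "tsum u = tsum v"
    using tsum_cell_boundaries[OF assms(1)] by simp
  then have "path_below (g @ u) M (winv v)"
    using assms(3) by (simp add: level_simps)
  then have "homotopic_below g M (u @ [] @ []) (u @ (winv v @ v) @ [])"
    using homotopic_below_insert_inverse[of "g @ u" M "winv v"] assms(2)
    by (intro homotopic_below_context) (auto simp: level_simps dest: levels_below_end)
  then have "homotopic_below g M u ((u @ winv v) @ v)"
    by simp
  also have "homotopic_below g M \<dots> v"
    using elem_step.del_rel[OF assms(1), of "[]" v] assms \<open>path_below (g @ u) M (winv v)\<close>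
    by (intro homotopic_below_elem_step) (simp_all add: level_simps)
  finally show ?thesis .
qed

lemma push_up_letter:
  "real_of_int (tsum g) + 1 \<le> M \<Longrightarrow>
    homotopic_below g M [(Gen a, e), t_up] (t_up # lift_word (phi_word \<phi> [(a, e)]))"
  using conjugation_in_cell_boundaries[of a e \<phi> R]
  by (intro homotopic_below_cell_replace) (simp_all add: level_simps)

lemma push_down_letter:
  "real_of_int (tsum g) \<le> M \<Longrightarrow>
    homotopic_below g M [t_down, (Gen a, e)] (lift_word (phi_word \<phi> [(a, e)]) @ [t_down])"
  using conjugation_rotated_in_cell_boundaries[of a e \<phi> R]
  by (intro homotopic_below_cell_replace) (simp_all add: level_simps)

lemma push_down_word:
  "real_of_int (tsum g) \<le> M \<Longrightarrow>
    homotopic_below g M (t_down # lift_word X) (lift_word (phi_word \<phi> X) @ [t_down])"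
proof (induction X arbitrary: g)
  case (Cons x X)
  obtain a e where x: "x = (a, e)"
    by force
  let ?Z = "lift_word (phi_word \<phi> [(a, e)])"
  have "homotopic_below g M (t_down # (Gen a, e) # lift_word X) (?Z @ t_down # lift_word X)"
    by (rule homotopic_below_contextI[where p = "[]" and s = "lift_word X", OF push_down_letter])
      (use Cons.prems in \<open>simp_all add: level_simps\<close>)
  also have "homotopic_below g M \<dots> (?Z @ lift_word (phi_word \<phi> X) @ [t_down])"
    by (rule homotopic_below_contextI[where p = ?Z and s = "[]", OF Cons.IH])
      (use Cons.prems in \<open>simp_all add: level_simps\<close>)
  finally show ?case
    by (simp add: x)
qed simp

lemma push_up_word:
  "real_of_int (tsum g) + 1 \<le> M \<Longrightarrow>
    homotopic_below g M (lift_word X @ [t_up]) (t_up # lift_word (phi_word \<phi> X))"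
proof (induction X arbitrary: g)
  case (Cons x X)
  obtain a e where x: "x = (a, e)"
    by force
  have "homotopic_below g M ((Gen a, e) # lift_word X @ [t_up])
      ((Gen a, e) # t_up # lift_word (phi_word \<phi> X))"
    by (rule homotopic_below_contextI[where p = "[(Gen a, e)]" and s = "[]", OF Cons.IH])
      (use Cons.prems in \<open>simp_all add: level_simps\<close>)
  also have "homotopic_below g M \<dots>
      (t_up # lift_word (phi_word \<phi> [(a, e)]) @ lift_word (phi_word \<phi> X))"
    by (rule homotopic_below_contextI[where p = "[]" and s = "lift_word (phi_word \<phi> X)",
          OF push_up_letter]) (use Cons.prems in \<open>simp_all add: level_simps\<close>)
  finally show ?case
    by (simp add: x)
qed simp

lemma push_down_power:
  "real_of_int (tsum g) \<le> M \<Longrightarrow>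
    homotopic_below g M (replicate q t_down @ lift_word X)
      (lift_word ((phi_word \<phi> ^^ q) X) @ replicate q t_down)"
proof (induction q arbitrary: g)
  case (Suc q)
  have "homotopic_below g M (t_down # replicate q t_down @ lift_word X)
      (t_down # lift_word ((phi_word \<phi> ^^ q) X) @ replicate q t_down)"
    by (rule homotopic_below_contextI[where p = "[t_down]" and s = "[]", OF Suc.IH])
      (use Suc.prems in \<open>simp_all add: level_simps\<close>)
  also have "homotopic_below g M \<dots>
      (lift_word ((phi_word \<phi> ^^ Suc q) X) @ t_down # replicate q t_down)"
    by (rule homotopic_below_contextI[where p = "[]" and s = "replicate q t_down",
          OF push_down_word])
      (use Suc.prems in \<open>simp_all add: level_simps\<close>)
  finally show ?case
    by (simp add: replicate_append_same)
qed simp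

lemma conjugate_up_power:
  "real_of_int (tsum g) + i \<le> M \<Longrightarrow>
    homotopic_below g M (lift_word X)
      (replicate i t_up @ lift_word ((phi_word \<phi> ^^ i) X) @ replicate i t_down)"
proof -
  assume level: "real_of_int (tsum g) + i \<le> M"
  have "homotopic_below g M (lift_word X) (replicate i t_up @ replicate i t_down @ lift_word X)"
    by (rule homotopic_below_contextI[where p = "[]" and s = "lift_word X",
          OF homotopic_below_insert_inverse[where v = "replicate i t_up"]])
      (use level in \<open>simp_all add: level_simps\<close>)
  also have "homotopic_below g M \<dots>
      (replicate i t_up @ lift_word ((phi_word \<phi> ^^ i) X) @ replicate i t_down)"
    by (rule homotopic_below_contextI[where p = "replicate i t_up" and s = "[]",
          OF push_down_power])
      (use level in \<open>simp_all add: level_simps\<close>)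
  finally show ?thesis .
qed

lemma relator_image_contractible:
  assumes "r \<in> R" "real_of_int (tsum g) \<le> M"
  shows "homotopic_below g M (lift_word ((phi_word \<phi> ^^ j) r)) []"
proof -
  let ?Z = "lift_word ((phi_word \<phi> ^^ j) r)"
  have "homotopic_below g M [] (replicate j t_down @ replicate j t_up)"
    using homotopic_below_insert_inverse[of g M "replicate j t_down"] assms(2)
    by (simp add: level_simps)
  also have "homotopic_below g M \<dots> (replicate j t_down @ lift_word r @ replicate j t_up)"
    using elem_step.ins_rel[OF lift_word_in_cell_boundaries[OF assms(1)],
        where u = "replicate j t_down" and v = "replicate j t_up"]
      assms(2)
    by (intro homotopic_below_elem_step) (simp_all add: level_simps)
  also have "homotopic_below g M \<dots> (?Z @ replicate j t_down @ replicate j t_up)"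
    by (rule homotopic_below_contextI[where p = "[]" and s = "replicate j t_up",
          OF push_down_power])
      (use assms(2) in \<open>simp_all add: level_simps\<close>)
  also have "homotopic_below g M \<dots> ?Z"
    by (rule homotopic_below_sym, rule homotopic_below_contextI[where p = ?Z and s = "[]",
          OF homotopic_below_insert_inverse[where v = "replicate j t_down"]])
      (use assms(2) in \<open>simp_all add: level_simps\<close>)
  finally show ?thesis
    by (rule homotopic_below_sym)
qed

lemma homotopic_below_lift_elem_step:
  assumes "elem_step (N0_relators \<phi> R) V V'" "real_of_int (tsum g) \<le> M"
  shows "homotopic_below g M (lift_word V) (lift_word V')"
  using assms(1)
proof (cases rule: elem_step.cases)
  case (ins_free u v x e)
  show ?thesis
    using elem_step.ins_free[of _ "lift_word u" "lift_word v" "Gen x" e] assms(2) ins_free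
    by (intro homotopic_below_elem_step) (simp_all add: level_simps)
next
  case (del_free u x e v)
  show ?thesis
    using elem_step.del_free[of _ "lift_word u" "Gen x" e "lift_word v"] assms(2) del_free
    by (intro homotopic_below_elem_step) (simp_all add: level_simps)
next
  case (ins_rel r u v)
  then obtain j r0 where r: "r = (phi_word \<phi> ^^ j) r0" "r0 \<in> R"
    unfolding N0_relators_def by blast
  show ?thesis
    by (rule homotopic_below_contextI[where p = "lift_word u" and s = "lift_word v",
          OF homotopic_below_sym[OF relator_image_contractible[where r = r0 and j = j]]])
      (use ins_rel r assms(2) in \<open>simp_all add: level_simps\<close>)
next
  case (del_rel r u v)
  then obtain j r0 where r: "r = (phi_word \<phi> ^^ j) r0" "r0 \<in> R"
    unfolding N0_relators_def by blast
  show ?thesis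
    by (rule homotopic_below_contextI[where p = "lift_word u" and s = "lift_word v",
          OF relator_image_contractible[where r = r0 and j = j]])
      (use del_rel r assms(2) in \<open>simp_all add: level_simps\<close>)
qed

lemma homotopic_below_lift:
  assumes "equiv_mod (N0_relators \<phi> R) V V'" "real_of_int (tsum g) \<le> M"
  shows "homotopic_below g M (lift_word V) (lift_word V')"
  using assms(1)
  by (induction rule: rtranclp_induct)
    (auto intro: rtranclp_trans homotopic_below_lift_elem_step[OF _ assms(2)])

lemma lift_N0_contractible:
  assumes "(phi_word \<phi> ^^ k) W \<in> N0 \<phi> R" "real_of_int (tsum g) + k \<le> M"
  shows "homotopic_below g M (lift_word W) []"
proof -
  have "homotopic_below g M (lift_word W)
      (replicate k t_up @ lift_word ((phi_word \<phi> ^^ k) W) @ replicate k t_down)"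
    using assms(2) by (rule conjugate_up_power)
  also have "homotopic_below g M \<dots> (replicate k t_up @ lift_word [] @ replicate k t_down)"
    using assms(1) unfolding N0_def in_normal_closure_def N0_relators_def[symmetric]
    by (intro homotopic_below_context[OF homotopic_below_lift])
      (use assms(2) in \<open>simp_all add: level_simps\<close>)
  also have "homotopic_below g M \<dots> []"
    using homotopic_below_insert_inverse[of g M "replicate k t_up"] assms(2)
    by (simp add: homotopic_below_sym level_simps)
  finally show ?thesis .
qed

lemma nf_step_level:
  assumes "real_of_int (tsum g) + p \<le> L" "real_of_int (tsum g + int p - int q + tsum [x]) \<le> L"
  shows "real_of_int (tsum g) + fst (nf_step \<phi> (p, W, q) x) \<le> L"
proof -
  obtain l e where x: "x = (l, e)"
    by force
  then show ?thesis
    using assms by (cases l; cases e; cases q) auto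
qed

lemma nf_step_homotopic:
  assumes "real_of_int (tsum g) + p \<le> L" "real_of_int (tsum g + int p - int q + tsum [x]) \<le> L"
  shows "homotopic_below g L (nf_path (p, W, q) @ [x]) (nf_path (nf_step \<phi> (p, W, q) x))"
proof -
  obtain l e where x: "x = (l, e)"
    by force
  show ?thesis
  proof (cases l)
    case (Gen a)
    let ?u = "replicate p t_up @ lift_word W"
    have "homotopic_below g L (?u @ (replicate q t_down @ lift_word [(a, e)]) @ [])
        (?u @ (lift_word ((phi_word \<phi> ^^ q) [(a, e)]) @ replicate q t_down) @ [])"
      by (rule homotopic_below_context[OF push_down_power])
        (use assms(1) in \<open>simp_all add: level_simps\<close>)
    then show ?thesis
      by (simp add: x Gen)
  next
    case T
    show ?thesis
    proof (cases e)
      case True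
      then show ?thesis
        by (simp add: x T replicate_append_same)
    next
      case False
      show ?thesis
      proof (cases q)
        case (Suc q')
        let ?u = "replicate p t_up @ lift_word W @ replicate q' t_down"
        have "elem_step (cell_boundaries \<phi> R) (?u @ [t_down, (T, \<not> True)] @ []) (?u @ [])"
          by (rule elem_step.del_free)
        then have "homotopic_below g L (?u @ [t_down, t_up]) ?u"
          using assms(1) by (intro homotopic_below_elem_step) (simp_all add: level_simps)
        then show ?thesis
          by (simp add: x T False Suc flip: replicate_append_same)
      next
        case 0
        have "homotopic_below g L (replicate p t_up @ (lift_word W @ [t_up]) @ [])
            (replicate p t_up @ (t_up # lift_word (phi_word \<phi> W)) @ [])"
          by (rule homotopic_below_context[OF push_up_word])
            (use assms in \<open>simp_all add: level_simps x T False 0\<close>)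
        then show ?thesis
          by (simp add: x T False 0 replicate_app_Cons_same)
      qed
    qed
  qed
qed

lemma homotopic_below_nf_path:
  "path_below g L w \<Longrightarrow> real_of_int (tsum g) + fst (nf_run \<phi> (0, [], 0) w) \<le> L \<and>
    homotopic_below g L w (nf_path (nf_run \<phi> (0, [], 0) w))"
proof (induction w rule: rev_induct)
  case Nil
  then show ?case
    by (simp add: level_simps)
next
  case (snoc x w)
  obtain p W q where s: "nf_run \<phi> (0, [], 0) w = (p, W, q)"
    by (cases "nf_run \<phi> (0, [], 0) w")
  have level: "real_of_int (tsum g) + p \<le> L" and hom: "homotopic_below g L w (nf_path (p, W, q))"
    using snoc by (auto simp: s level_simps)
  have "tsum w = int p - int q"
    using homotopic_below_tsum[OF hom] by simp
  moreover have "real_of_int (tsum g + tsum w + tsum [x]) \<le> L"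
    using snoc.prems levels_below_end by (fastforce simp: level_simps)
  ultimately have level_x: "real_of_int (tsum g + int p - int q + tsum [x]) \<le> L"
    by simp
  have "homotopic_below g L (w @ [x]) (nf_path (p, W, q) @ [x])"
    using hom snoc.prems by (rule homotopic_below_append_right)
  also have "homotopic_below g L \<dots> (nf_path (nf_step \<phi> (p, W, q) x))"
    using level level_x by (rule nf_step_homotopic)
  finally show ?case
    using nf_step_level[OF level level_x] by (simp add: s)
qed

lemma nf_path_contractible:
  assumes "(phi_word \<phi> ^^ k) W \<in> N0 \<phi> R" "real_of_int (tsum g) + p + k \<le> M"
  shows "homotopic_below g M (nf_path (p, W, p)) []"
proof -
  have "homotopic_below g M (replicate p t_up @ lift_word W @ replicate p t_down)
      (replicate p t_up @ [] @ replicate p t_down)"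
    by (rule homotopic_below_context[OF lift_N0_contractible[OF assms(1)]])
      (use assms(2) in \<open>simp_all add: level_simps\<close>)
  also have "homotopic_below g M \<dots> []"
    using homotopic_below_insert_inverse[of g M "replicate p t_up"] assms(2)
    by (simp add: homotopic_below_sym level_simps)
  finally show ?thesis
    by simp
qed

end

theorem lemma5p9:
  fixes \<phi> :: "'a::finite \<Rightarrow> 'a fword"
    and R :: "'a fword set"
    and B :: nat
    and g w :: "'a letter fword"
    and L :: real
  assumes "finite R"
    and "bounded_depth \<phi> R B"
    and "in_normal_closure (pres_rels \<phi> R) w"
    and "path_below g L w"
  shows "(bounded_step \<phi> R g (L + real B))\<^sup>*\<^sup>* w []"
proof -
  obtain p W q where s: "nf_run \<phi> (0, [], 0) w = (p, W, q)"
    by (cases "nf_run \<phi> (0, [], 0) w")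
  have level: "real_of_int (tsum g) + p \<le> L"
    and hom: "homotopic_below \<phi> R g L w (nf_path (p, W, q))"
    using homotopic_below_nf_path[where \<phi> = \<phi> and R = R, OF assms(4)] by (auto simp: s)
  obtain i where "p = q" and "equiv_mod (N0_relators \<phi> R) ((phi_word \<phi> ^^ i) W) []"
    using nf_run_normal_closure[OF assms(3), of "(0, [], 0)"] by (auto simp: s)
  then obtain k where "k \<le> B" and "(phi_word \<phi> ^^ k) W \<in> N0 \<phi> R"
    using assms(2) unfolding bounded_depth_def N0_def in_normal_closure_def N0_relators_def by auto
  have "homotopic_below \<phi> R g (L + real B) w (nf_path (p, W, p))"
    using homotopic_below_mono[OF _ hom] \<open>p = q\<close> by simp
  also have "homotopic_below \<phi> R g (L + real B) \<dots> []"
    using level \<open>k \<le> B\<close> by (intro nf_path_contractible[OF \<open>(phi_word \<phi> ^^ k) W \<in> N0 \<phi> R\<close>]) simp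
  finally show ?thesis .
qed

end
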